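(* $\mathfrak{L}(\mathbf{F}_2\times\mathbf{F}_2)^w_{O(n)} \subsetneq \mathsf{RE}$.
   Context: For a group $G$ with identity $e$, a $G$-automaton is a tuple $(Q,\Sigma,G,\delta,q_0,Q_a)$ where $Q$ is a finite set of states, $\Sigma$ a finite input alphabet, $q_0\in Q$ the initial state, $Q_a\subseteq Q$ the accepting states, and $\delta$ assigns to each $(q,\sigma)\in Q\times(\Sigma\cup\{\varepsilon\})$ a finite set of pairs $(q',m)\in Q\times G$. The register holds an element of $G$, initially $e$; using a transition $(q',m)\in\delta(q,\sigma)$ (one step) the automaton reads $\sigma$ (or nothing), moves to $q'$ and replaces the register content $x$ by $xm$. A word is accepted if some computation reads it entirely and ends in an accepting state with register equal to $e$. A $G$-automaton recognizing $\mathtt{L}$ is weakly $t(n)$ time-bounded if every $x\in\mathtt{L}$ with $|x|=n$ has an accepting computation of at most $t(n)$ steps; $\mathfrak{L}(G)^w_{O(n)}$ is the class of languages recognized by weakly $t(n)$ time-bounded $G$-automata for some $t(n)=O(n)$. $\mathbf{F}_2$ is the free group of rank 2; $\mathsf{RE}$ is the class of recursively enumerable languages. *)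

theory Defs
  imports "HOL-Algebra.Group" "HOL-Library.Nat_Bijection" "HOL-Library.Landau_Symbols"
begin

text \<open>Letters: (generator index, inverse flag).\<close>
type_synonym gen2 = "bool \<times> bool"

definition inv_gen :: "gen2 \<Rightarrow> gen2" where
  "inv_gen = (\<lambda>(x, s). (x, \<not> s))"

fun red :: "gen2 list \<Rightarrow> gen2 list" where
  "red [] = []"
| "red (g # w) = (case red w of [] \<Rightarrow> [g]
                   | h # r \<Rightarrow> (if h = inv_gen g then r else g # h # r))"

definition reduced :: "gen2 list \<Rightarrow> bool" where
  "reduced w \<longleftrightarrow> (\<forall>i. Suc i < length w \<longrightarrow> w ! Suc i \<noteq> inv_gen (w ! i))"

definition free_group2 :: "gen2 list monoid" where
  "free_group2 = \<lparr>carrier = {w. reduced w}, mult = (\<lambda>x y. red (x @ y)), one = []\<rparr>"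

text \<open>\<open>\<delta> q None\<close> are the epsilon-transitions, \<open>\<delta> q (Some \<sigma>)\<close> those reading \<open>\<sigma>\<close>.\<close>
definition is_G_automaton ::
  "('g, 'm) monoid_scheme \<Rightarrow> 'q set \<Rightarrow> 'a set \<Rightarrow> ('q \<Rightarrow> 'a option \<Rightarrow> ('q \<times> 'g) set)
     \<Rightarrow> 'q \<Rightarrow> 'q set \<Rightarrow> bool" where
  "is_G_automaton G Q \<Sigma> \<delta> q0 Qa \<longleftrightarrow>
     finite Q \<and> finite \<Sigma> \<and> q0 \<in> Q \<and> Qa \<subseteq> Q \<and>
     (\<forall>q s. finite (\<delta> q s) \<and> \<delta> q s \<subseteq> Q \<times> carrier G) \<and>
     (\<forall>q s. (q \<notin> Q \<or> (\<exists>a. s = Some a \<and> a \<notin> \<Sigma>)) \<longrightarrow> \<delta> q s = {})"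

inductive comp :: "('g, 'm) monoid_scheme \<Rightarrow> ('q \<Rightarrow> 'a option \<Rightarrow> ('q \<times> 'g) set)
     \<Rightarrow> 'q \<Rightarrow> 'a list \<Rightarrow> 'g \<Rightarrow> nat \<Rightarrow> 'q \<Rightarrow> 'g \<Rightarrow> bool"
  for G \<delta> where
  comp_nil: "comp G \<delta> q [] x 0 q x"
| comp_read: "(q1, m) \<in> \<delta> q (Some a) \<Longrightarrow> comp G \<delta> q1 w (x \<otimes>\<^bsub>G\<^esub> m) n q' x'
     \<Longrightarrow> comp G \<delta> q (a # w) x (Suc n) q' x'"
| comp_eps: "(q1, m) \<in> \<delta> q None \<Longrightarrow> comp G \<delta> q1 w (x \<otimes>\<^bsub>G\<^esub> m) n q' x'
     \<Longrightarrow> comp G \<delta> q w x (Suc n) q' x'"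

definition accepts_within ::
  "('g, 'm) monoid_scheme \<Rightarrow> ('q \<Rightarrow> 'a option \<Rightarrow> ('q \<times> 'g) set) \<Rightarrow> 'q \<Rightarrow> 'q set
     \<Rightarrow> 'a list \<Rightarrow> nat \<Rightarrow> bool" where
  "accepts_within G \<delta> q0 Qa w k \<longleftrightarrow>
     (\<exists>n q. comp G \<delta> q0 w \<one>\<^bsub>G\<^esub> n q \<one>\<^bsub>G\<^esub> \<and> q \<in> Qa \<and> n \<le> k)"

definition G_lang ::
  "('g, 'm) monoid_scheme \<Rightarrow> 'a set \<Rightarrow> ('q \<Rightarrow> 'a option \<Rightarrow> ('q \<times> 'g) set) \<Rightarrow> 'q \<Rightarrow> 'q set
     \<Rightarrow> 'a list set" where
  "G_lang G \<Sigma> \<delta> q0 Qa = {w \<in> lists \<Sigma>. \<exists>k. accepts_within G \<delta> q0 Qa w k}"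

text \<open>The class of languages recognised by weakly \<open>O(n)\<close> time-bounded G-automata
  (states taken from nat without loss of generality, since Q is finite).\<close>
definition weak_lin_class :: "('g, 'm) monoid_scheme \<Rightarrow> 'a list set set" where
  "weak_lin_class G = {L. \<exists>(Q :: nat set) \<Sigma> \<delta> q0 Qa (t :: nat \<Rightarrow> nat).
     is_G_automaton G Q \<Sigma> \<delta> q0 Qa \<and> G_lang G \<Sigma> \<delta> q0 Qa = L \<and>
     (\<lambda>n. real (t n)) \<in> O(\<lambda>n. real n) \<and>
     (\<forall>w \<in> L. accepts_within G \<delta> q0 Qa w (t (length w)))}"

datatype recf = Zf | Sf | Idf nat | Cnf recf "recf list" | Prf recf recf | Mnf recf

inductive rec_eval :: "recf \<Rightarrow> nat list \<Rightarrow> nat \<Rightarrow> bool" where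
  "rec_eval Zf xs 0"
| "rec_eval Sf (x # xs) (Suc x)"
| "i < length xs \<Longrightarrow> rec_eval (Idf i) xs (xs ! i)"
| "list_all2 (\<lambda>g y. rec_eval g xs y) gs ys \<Longrightarrow> rec_eval f ys r \<Longrightarrow> rec_eval (Cnf f gs) xs r"
| "rec_eval f xs r \<Longrightarrow> rec_eval (Prf f g) (0 # xs) r"
| "rec_eval (Prf f g) (n # xs) r \<Longrightarrow> rec_eval g (n # r # xs) r'
     \<Longrightarrow> rec_eval (Prf f g) (Suc n # xs) r'"
| "rec_eval f (n # xs) 0 \<Longrightarrow> (\<forall>i<n. \<exists>r. rec_eval f (i # xs) r \<and> 0 < r)
     \<Longrightarrow> rec_eval (Mnf f) xs n"

definition RE :: "nat list set set" where
  "RE = {L. \<exists>\<Sigma>. finite \<Sigma> \<and> L \<subseteq> lists \<Sigma> \<and>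
           (\<exists>f. \<forall>w. w \<in> L \<longleftrightarrow> (\<exists>r. rec_eval f [list_encode w] r))}"

end

theory Submission
  imports Defs
begin

(* Every automaton in the class has a time bound c (n + 1), and a computation of that length is
  determined by the sequence of transitions it uses.  The registers always hold pairs of reduced
  words, and free reduction is computable on a base-5 coding of words.  So "the automaton coded
  by a accepts the word coded by w" is decided by a bounded search over transition sequences,
  uniformly and primitive recursively in a and w.  Hence every language of the class is r.e.,
  and diagonalizing against this uniform decision procedure on the words 0^a yields an r.e.
  (even decidable) language outside the class. *)

section \<open>Total recursive functions\<close>

definition computes :: "recf \<Rightarrow> nat \<Rightarrow> (nat list \<Rightarrow> nat) \<Rightarrow> bool" where
  "computes f k F \<longleftrightarrow> (\<forall>xs. length xs = k \<longrightarrow> (\<forall>r. rec_eval f xs r \<longleftrightarrow> r = F xs))"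

definition computable :: "nat \<Rightarrow> (nat list \<Rightarrow> nat) \<Rightarrow> bool" where
  "computable k F \<longleftrightarrow> (\<exists>f. computes f k F)"

lemma computable_cong:
  "computable k F \<Longrightarrow> (\<And>xs. length xs = k \<Longrightarrow> F xs = G xs) \<Longrightarrow> computable k G"
  unfolding computable_def computes_def by metis

lemma computable_zero: "computable k (\<lambda>xs. 0)"
proof -
  have "computes Zf k (\<lambda>xs. 0)"
    unfolding computes_def by (auto intro: rec_eval.intros elim: rec_eval.cases)
  then show ?thesis unfolding computable_def by blast
qed

lemma computable_Suc_nth0: "computable (Suc k) (\<lambda>xs. Suc (xs ! 0))"
proof -
  have "computes Sf (Suc k) (\<lambda>xs. Suc (xs ! 0))"
    unfolding computes_def
  proof (intro allI impI)
    fix xs :: "nat list" and r :: nat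
    assume "length xs = Suc k"
    then obtain y ys where xs: "xs = y # ys" by (cases xs) auto
    show "rec_eval Sf xs r \<longleftrightarrow> r = Suc (xs ! 0)"
      unfolding xs by (auto intro: rec_eval.intros elim: rec_eval.cases)
  qed
  then show ?thesis unfolding computable_def by blast
qed

lemma computable_nth: "i < k \<Longrightarrow> computable k (\<lambda>xs. xs ! i)"
proof -
  assume "i < k"
  then have "computes (Idf i) k (\<lambda>xs. xs ! i)"
    unfolding computes_def by (auto intro: rec_eval.intros elim: rec_eval.cases)
  then show ?thesis unfolding computable_def by blast
qed

lemma computes_list_all2_iff:
  assumes "list_all2 (\<lambda>g G. computes g k G) gs Gs" and "length xs = k"
  shows "list_all2 (\<lambda>g y. rec_eval g xs y) gs ys \<longleftrightarrow> ys = map (\<lambda>G. G xs) Gs"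
  using assms(1)
proof (induction gs Gs arbitrary: ys rule: list_all2_induct)
  case Nil
  then show ?case by auto
next
  case (Cons g G gs Gs)
  then show ?case using assms(2) unfolding computes_def by (cases ys) auto
qed

lemma computable_comp:
  assumes "computable (length Gs) F" and "\<forall>G\<in>set Gs. computable k G"
  shows "computable k (\<lambda>xs. F (map (\<lambda>G. G xs) Gs))"
proof -
  obtain f where f: "computes f (length Gs) F"
    using assms(1) unfolding computable_def by blast
  obtain gs where gs: "list_all2 (\<lambda>g G. computes g k G) gs Gs"
    using assms(2) unfolding computable_def
    by (induction Gs) (auto intro: exI[of _ "_ # _"])
  have "computes (Cnf f gs) k (\<lambda>xs. F (map (\<lambda>G. G xs) Gs))"
    unfolding computes_def
  proof (intro allI impI)
    fix xs :: "nat list" and r :: nat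
    assume "length xs = k"
    note args = computes_list_all2_iff[OF gs this]
    show "rec_eval (Cnf f gs) xs r \<longleftrightarrow> r = F (map (\<lambda>G. G xs) Gs)"
    proof
      assume "rec_eval (Cnf f gs) xs r"
      then obtain ys where "list_all2 (\<lambda>g y. rec_eval g xs y) gs ys" "rec_eval f ys r"
        by (auto elim: rec_eval.cases)
      then show "r = F (map (\<lambda>G. G xs) Gs)" using args f unfolding computes_def by auto
    next
      assume "r = F (map (\<lambda>G. G xs) Gs)"
      then show "rec_eval (Cnf f gs) xs r" using args f unfolding computes_def
        by (auto intro: rec_eval.intros)
    qed
  qed
  then show ?thesis unfolding computable_def by blast
qed

lemma computes_Prf:
  assumes f: "computes f k F" and g: "computes g (Suc (Suc k)) G" and "length ys = k"
  shows "rec_eval (Prf f g) (n # ys) r \<longleftrightarrow> r = rec_nat (F ys) (\<lambda>n r. G (n # r # ys)) n"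
proof (induction n arbitrary: r)
  case 0
  show ?case using f \<open>length ys = k\<close> unfolding computes_def
    by (auto intro: rec_eval.intros elim: rec_eval.cases)
next
  case (Suc n)
  show ?case
  proof
    assume "rec_eval (Prf f g) (Suc n # ys) r"
    then obtain r0 where "rec_eval (Prf f g) (n # ys) r0" "rec_eval g (n # r0 # ys) r"
      by (auto elim: rec_eval.cases)
    then show "r = rec_nat (F ys) (\<lambda>n r. G (n # r # ys)) (Suc n)"
      using Suc g \<open>length ys = k\<close> unfolding computes_def by auto
  next
    assume "r = rec_nat (F ys) (\<lambda>n r. G (n # r # ys)) (Suc n)"
    then show "rec_eval (Prf f g) (Suc n # ys) r"
      using Suc g \<open>length ys = k\<close> unfolding computes_def by (auto intro: rec_eval.intros)
  qed
qed

lemma computable_Prf: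
  assumes "computable k F" and "computable (Suc (Suc k)) G"
  shows "computable (Suc k) (\<lambda>xs. rec_nat (F (tl xs)) (\<lambda>n r. G (n # r # tl xs)) (hd xs))"
proof -
  obtain f g where f: "computes f k F" and g: "computes g (Suc (Suc k)) G"
    using assms unfolding computable_def by blast
  have "computes (Prf f g) (Suc k) (\<lambda>xs. rec_nat (F (tl xs)) (\<lambda>n r. G (n # r # tl xs)) (hd xs))"
    unfolding computes_def
  proof (intro allI impI)
    fix xs :: "nat list" and r :: nat
    assume "length xs = Suc k"
    then obtain n ys where "xs = n # ys" "length ys = k" by (cases xs) auto
    then show "rec_eval (Prf f g) xs r \<longleftrightarrow>
        r = rec_nat (F (tl xs)) (\<lambda>n r. G (n # r # tl xs)) (hd xs)"
      using computes_Prf[OF f g] by simp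
  qed
  then show ?thesis unfolding computable_def by blast
qed

lemma computable_reindex:
  assumes "computable m F" and "\<forall>i<m. idx i < k"
  shows "computable k (\<lambda>xs. F (map (\<lambda>i. xs ! idx i) [0..<m]))"
proof -
  have "computable k (\<lambda>xs. F (map (\<lambda>G. G xs) (map (\<lambda>i xs. xs ! idx i) [0..<m])))"
    by (rule computable_comp) (use assms in \<open>auto intro: computable_nth\<close>)
  then show ?thesis by (simp add: comp_def)
qed

lemma computable_rec_nat:
  assumes "computable k B" and "computable (Suc (Suc k)) S" and "computable k N"
  shows "computable k (\<lambda>xs. rec_nat (B xs) (\<lambda>n r. S (n # r # xs)) (N xs))"
proof -
  have "computable k (\<lambda>xs. (\<lambda>xs. rec_nat (B (tl xs)) (\<lambda>n r. S (n # r # tl xs)) (hd xs))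
        (map (\<lambda>G. G xs) (N # map (\<lambda>i xs. xs ! i) [0..<k])))"
    by (rule computable_comp)
      (use computable_Prf[OF assms(1,2)] assms(3) in \<open>auto intro: computable_nth\<close>)
  then show ?thesis
    by (rule computable_cong) (simp add: comp_def, metis map_nth)
qed

lemma computable_lift1:
  "computable 1 (\<lambda>xs. h (xs ! 0)) \<Longrightarrow> computable k f \<Longrightarrow> computable k (\<lambda>xs. h (f xs))"
  using computable_comp[of "[f]" "\<lambda>xs. h (xs ! 0)" k] by simp

lemma computable_lift2:
  "computable 2 (\<lambda>xs. h (xs ! 0) (xs ! 1)) \<Longrightarrow> computable k f \<Longrightarrow> computable k g \<Longrightarrow>
   computable k (\<lambda>xs. h (f xs) (g xs))"
  using computable_comp[of "[f, g]" "\<lambda>xs. h (xs ! 0) (xs ! 1)" k] by (simp add: numeral_eq_Suc)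

lemma computable_lift4:
  "computable 4 (\<lambda>xs. h (xs ! 0) (xs ! 1) (xs ! 2) (xs ! 3)) \<Longrightarrow>
   computable k f \<Longrightarrow> computable k g \<Longrightarrow> computable k u \<Longrightarrow> computable k v \<Longrightarrow>
   computable k (\<lambda>xs. h (f xs) (g xs) (u xs) (v xs))"
  using computable_comp[of "[f, g, u, v]" "\<lambda>xs. h (xs ! 0) (xs ! 1) (xs ! 2) (xs ! 3)" k]
  by (simp add: numeral_eq_Suc)

lemma computable_Suc: "computable k f \<Longrightarrow> computable k (\<lambda>xs. Suc (f xs))"
  by (rule computable_lift1) (use computable_Suc_nth0[of 0] in simp)

lemma computable_const: "computable k (\<lambda>xs. c)"
  by (induction c) (auto intro: computable_zero computable_Suc)

lemma computable_add_nth: "computable 2 (\<lambda>xs. xs ! 0 + xs ! 1)"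
proof -
  have rec: "rec_nat b (\<lambda>n r. Suc r) n = n + b" for b n :: nat
    by (induction n) auto
  have "computable 2 (\<lambda>xs. rec_nat (xs ! 1) (\<lambda>n r. (\<lambda>ys. Suc (ys ! 1)) (n # r # xs)) (xs ! 0))"
    by (intro computable_rec_nat computable_Suc computable_nth) auto
  then show ?thesis by (rule computable_cong) (simp add: rec)
qed

lemma computable_add: "computable k f \<Longrightarrow> computable k g \<Longrightarrow> computable k (\<lambda>xs. f xs + g xs)"
  by (rule computable_lift2[OF computable_add_nth])

lemma computable_mult_nth: "computable 2 (\<lambda>xs. xs ! 0 * xs ! 1)"
proof -
  have rec: "rec_nat 0 (\<lambda>n r. r + b) n = n * b" for b n :: nat
    by (induction n) auto
  have "computable 2 (\<lambda>xs. rec_nat 0 (\<lambda>n r. (\<lambda>ys. ys ! 1 + ys ! 3) (n # r # xs)) (xs ! 0))"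
    by (intro computable_rec_nat computable_const computable_add computable_nth) auto
  then show ?thesis by (rule computable_cong) (simp add: rec numeral_eq_Suc)
qed

lemma computable_mult: "computable k f \<Longrightarrow> computable k g \<Longrightarrow> computable k (\<lambda>xs. f xs * g xs)"
  by (rule computable_lift2[OF computable_mult_nth])

lemma computable_pred_nth: "computable 1 (\<lambda>xs. xs ! 0 - 1)"
proof -
  have rec: "rec_nat 0 (\<lambda>n r. n) n = n - 1" for n :: nat
    by (induction n) auto
  have "computable 1 (\<lambda>xs. rec_nat 0 (\<lambda>n r. (\<lambda>ys. ys ! 0) (n # r # xs)) (xs ! 0))"
    by (intro computable_rec_nat computable_const computable_nth) auto
  then show ?thesis by (rule computable_cong) (simp add: rec)
qed

lemma computable_diff_nth: "computable 2 (\<lambda>xs. xs ! 0 - xs ! 1)"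
proof -
  have rec: "rec_nat a (\<lambda>n r. r - Suc 0) n = a - n" for a n :: nat
    by (induction n) auto
  have "computable 2 (\<lambda>xs. rec_nat (xs ! 0) (\<lambda>n r. (\<lambda>ys. ys ! 1 - 1) (n # r # xs)) (xs ! 1))"
    by (intro computable_rec_nat computable_lift1[OF computable_pred_nth] computable_nth) auto
  then show ?thesis by (rule computable_cong) (simp add: rec)
qed

lemma computable_diff: "computable k f \<Longrightarrow> computable k g \<Longrightarrow> computable k (\<lambda>xs. f xs - g xs)"
  by (rule computable_lift2[OF computable_diff_nth])

lemmas computable_arith = computable_const computable_add computable_mult computable_diff computable_Suc

definition decidable :: "nat \<Rightarrow> (nat list \<Rightarrow> bool) \<Rightarrow> bool" where
  "decidable k P \<longleftrightarrow> computable k (\<lambda>xs. if P xs then 1 else 0)"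

lemma decidable_eq:
  assumes "computable k f" and "computable k g"
  shows "decidable k (\<lambda>xs. f xs = g xs)"
proof -
  have "computable k (\<lambda>xs. 1 - ((f xs - g xs) + (g xs - f xs)))"
    by (intro computable_arith assms)
  then show ?thesis unfolding decidable_def by (rule computable_cong) auto
qed

lemma decidable_le:
  assumes "computable k f" and "computable k g"
  shows "decidable k (\<lambda>xs. f xs \<le> g xs)"
proof -
  have "computable k (\<lambda>xs. 1 - (f xs - g xs))" by (intro computable_arith assms)
  then show ?thesis unfolding decidable_def by (rule computable_cong) auto
qed

lemma decidable_less:
  assumes "computable k f" and "computable k g"
  shows "decidable k (\<lambda>xs. f xs < g xs)"
proof -
  have "computable k (\<lambda>xs. 1 - (Suc (f xs) - g xs))" by (intro computable_arith assms)
  then show ?thesis unfolding decidable_def by (rule computable_cong) auto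
qed

lemma decidable_not:
  assumes "decidable k P"
  shows "decidable k (\<lambda>xs. \<not> P xs)"
proof -
  have "computable k (\<lambda>xs. 1 - (if P xs then 1 else 0))"
    by (intro computable_arith assms[unfolded decidable_def])
  then show ?thesis unfolding decidable_def by (rule computable_cong) auto
qed

lemma decidable_conj:
  assumes "decidable k P" and "decidable k Q"
  shows "decidable k (\<lambda>xs. P xs \<and> Q xs)"
proof -
  have "computable k (\<lambda>xs. (if P xs then 1 else 0) * (if Q xs then 1 else 0))"
    by (intro computable_arith assms[unfolded decidable_def])
  then show ?thesis unfolding decidable_def by (rule computable_cong) auto
qed

lemma decidable_disj:
  assumes "decidable k P" and "decidable k Q"
  shows "decidable k (\<lambda>xs. P xs \<or> Q xs)"
proof -
  have "decidable k (\<lambda>xs. \<not> (\<not> P xs \<and> \<not> Q xs))"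
    by (intro decidable_not decidable_conj assms)
  then show ?thesis by simp
qed

lemma decidable_imp:
  assumes "decidable k P" and "decidable k Q"
  shows "decidable k (\<lambda>xs. P xs \<longrightarrow> Q xs)"
proof -
  have "decidable k (\<lambda>xs. \<not> P xs \<or> Q xs)" by (intro decidable_not decidable_disj assms)
  then show ?thesis by simp
qed

lemma computable_if:
  assumes "decidable k P" and "computable k f" and "computable k g"
  shows "computable k (\<lambda>xs. if P xs then f xs else g xs)"
proof -
  have "computable k (\<lambda>xs. (if P xs then 1 else 0) * f xs + (1 - (if P xs then 1 else 0)) * g xs)"
    by (intro computable_arith assms[unfolded decidable_def] assms)
  then show ?thesis by (rule computable_cong) auto
qed

text \<open>Parameters of a bounded operator are passed as the tail \<open>map (\<lambda>j. ys ! Suc j) [0..<k]\<close>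
  rather than \<open>tl ys\<close>: for a concrete \<open>k\<close> its entries simplify to projections.\<close>

lemma computable_sum:
  assumes F: "computable (Suc k) (\<lambda>ys. F (ys ! 0) (map (\<lambda>j. ys ! Suc j) [0..<k]))"
    and N: "computable k N"
  shows "computable k (\<lambda>xs. \<Sum>i<N xs. F i xs)"
proof -
  have "computable (Suc (Suc k)) (\<lambda>ys. (\<lambda>ys. F (ys ! 0) (map (\<lambda>j. ys ! Suc j) [0..<k]))
      (map (\<lambda>i. ys ! (if i = 0 then 0 else Suc i)) [0..<Suc k]))"
    by (rule computable_reindex[OF F]) auto
  then have F2: "computable (Suc (Suc k)) (\<lambda>ys. F (ys ! 0) (drop 2 ys))"
  proof (rule computable_cong)
    fix ys :: "nat list"
    assume "length ys = Suc (Suc k)"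
    then have "map (\<lambda>j. map (\<lambda>i. ys ! (if i = 0 then 0 else Suc i)) [0..<Suc k] ! Suc j) [0..<k]
        = drop 2 ys"
      by (intro nth_equalityI) (auto simp: nth_append simp del: upt_Suc)
    then show "(\<lambda>ys. F (ys ! 0) (map (\<lambda>j. ys ! Suc j) [0..<k]))
        (map (\<lambda>i. ys ! (if i = 0 then 0 else Suc i)) [0..<Suc k]) = F (ys ! 0) (drop 2 ys)"
      by (simp del: upt_Suc add: nth_Cons')
  qed
  have rec: "rec_nat 0 (\<lambda>n r. r + G n) m = (\<Sum>i<m. G i)" for G :: "nat \<Rightarrow> nat" and m
    by (induction m) auto
  have "computable k (\<lambda>xs. rec_nat 0 (\<lambda>n r. (\<lambda>ys. ys ! 1 + F (ys ! 0) (drop 2 ys)) (n # r # xs)) (N xs))"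
    by (intro computable_rec_nat computable_const computable_add computable_nth F2 N) simp
  then show ?thesis by (rule computable_cong) (simp add: rec)
qed

lemma decidable_bex_less:
  assumes "decidable (Suc k) (\<lambda>ys. P (ys ! 0) (map (\<lambda>j. ys ! Suc j) [0..<k]))"
    and "computable k N"
  shows "decidable k (\<lambda>xs. \<exists>i<N xs. P i xs)"
proof -
  have "computable k (\<lambda>xs. 1 - (1 - (\<Sum>i<N xs. if P i xs then 1 else 0)))"
    by (intro computable_arith computable_sum assms(1)[unfolded decidable_def] assms(2))
  then show ?thesis unfolding decidable_def
  proof (rule computable_cong)
    fix xs :: "nat list"
    have "(\<Sum>i<N xs. if P i xs then 1 else 0) = (0::nat) \<longleftrightarrow> \<not> (\<exists>i<N xs. P i xs)"
      by auto
    then show "1 - (1 - (\<Sum>i<N xs. if P i xs then 1 else 0)) = (if \<exists>i<N xs. P i xs then 1 else 0::nat)"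
      by (cases "\<exists>i<N xs. P i xs") (simp_all del: sum_eq_0_iff)
  qed
qed

lemma decidable_ball_less:
  assumes "decidable (Suc k) (\<lambda>ys. P (ys ! 0) (map (\<lambda>j. ys ! Suc j) [0..<k]))"
    and "computable k N"
  shows "decidable k (\<lambda>xs. \<forall>i<N xs. P i xs)"
  using decidable_not[OF decidable_bex_less[OF decidable_not[OF assms(1)] assms(2)]] by simp

lemmas computable_intros = computable_const computable_nth computable_add computable_mult
  computable_diff computable_Suc computable_if computable_sum
  decidable_eq decidable_le decidable_less decidable_not decidable_conj decidable_disj
  decidable_imp decidable_bex_less decidable_ball_less

lemma sum_indicator_less: "q \<le> n \<Longrightarrow> (\<Sum>i<n. if i < q then 1 else 0) = (q::nat)"
  by (induction n) (auto simp: less_Suc_eq)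

lemma computable_div_nth: "computable 2 (\<lambda>xs. xs ! 0 div xs ! 1)"
proof -
  have div: "(\<Sum>i<a. if Suc i * b \<le> a then 1 else 0) = a div b" if "b \<noteq> 0" for a b :: nat
  proof -
    have "Suc i * b \<le> a \<longleftrightarrow> i < a div b" for i
      using that div_less_iff_less_mult[of b a "Suc i"] by auto
    then show ?thesis by (simp add: sum_indicator_less)
  qed
  have "computable 2 (\<lambda>xs. if xs ! 1 = 0 then 0
      else \<Sum>i<xs ! 0. if Suc i * xs ! 1 \<le> xs ! 0 then 1 else 0)"
    by (intro computable_intros | simp)+
  then show ?thesis by (rule computable_cong) (simp add: div del: mult_Suc)
qed

lemma computable_div: "computable k f \<Longrightarrow> computable k g \<Longrightarrow> computable k (\<lambda>xs. f xs div g xs)"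
  by (rule computable_lift2[OF computable_div_nth])

lemma computable_mod:
  assumes "computable k f" and "computable k g"
  shows "computable k (\<lambda>xs. f xs mod g xs)"
proof -
  have "computable k (\<lambda>xs. f xs - f xs div g xs * g xs)"
    by (intro computable_diff computable_mult computable_div assms)
  then show ?thesis by (rule computable_cong) (simp add: minus_div_mult_eq_mod)
qed

lemma computable_power_nth: "computable 2 (\<lambda>xs. xs ! 0 ^ xs ! 1)"
proof -
  have rec: "rec_nat (Suc 0) (\<lambda>n r. r * b) e = b ^ e" for b e :: nat
    by (induction e) (auto simp: mult.commute)
  have "computable 2 (\<lambda>xs. rec_nat 1 (\<lambda>n r. (\<lambda>ys. ys ! 1 * ys ! 2) (n # r # xs)) (xs ! 1))"
    by (intro computable_rec_nat computable_const computable_mult computable_nth) auto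
  then show ?thesis by (rule computable_cong) (simp add: rec)
qed

lemma computable_power: "computable k f \<Longrightarrow> computable k g \<Longrightarrow> computable k (\<lambda>xs. f xs ^ g xs)"
  by (rule computable_lift2[OF computable_power_nth])

lemma decidable_lift2:
  "decidable 2 (\<lambda>xs. P (xs ! 0) (xs ! 1)) \<Longrightarrow> computable k f \<Longrightarrow> computable k g \<Longrightarrow>
   decidable k (\<lambda>xs. P (f xs) (g xs))"
  unfolding decidable_def by (rule computable_lift2[where h = "\<lambda>a b. if P a b then 1 else 0"])

section \<open>Computability of pairing and of list coding\<close>

lemma computable_prod_encode:
  "computable k f \<Longrightarrow> computable k g \<Longrightarrow> computable k (\<lambda>xs. prod_encode (f xs, g xs))"
proof (rule computable_lift2[where h = "\<lambda>a b. prod_encode (a, b)"])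
  have "triangle n = (\<Sum>i<n. Suc i)" for n
    by (induction n) auto
  moreover have "computable 2 (\<lambda>xs. (\<Sum>i<xs ! 0 + xs ! 1. Suc i) + xs ! 0)"
    by (intro computable_intros | simp)+
  ultimately show "computable 2 (\<lambda>xs. prod_encode (xs ! 0, xs ! 1))"
    unfolding prod_encode_def by simp
qed

lemma prod_encode_eq_iff: "prod_encode p = n \<longleftrightarrow> p = prod_decode n"
  by (metis prod_decode_inverse prod_encode_inverse)

lemma fst_prod_decode_le: "fst (prod_decode n) \<le> n"
  by (metis le_prod_encode_1 prod.collapse prod_decode_inverse)

lemma snd_prod_decode_le: "snd (prod_decode n) \<le> n"
  by (metis le_prod_encode_2 prod.collapse prod_decode_inverse)

lemma prod_encode_mono: "a \<le> a' \<Longrightarrow> b \<le> b' \<Longrightarrow> prod_encode (a, b) \<le> prod_encode (a', b')"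
  unfolding prod_encode_def triangle_def by (simp add: add_mono div_le_mono mult_le_mono)

text \<open>The components of \<open>prod_decode n\<close> are found by a search bounded by \<open>n\<close>.\<close>

lemma computable_fst_prod_decode: "computable k f \<Longrightarrow> computable k (\<lambda>xs. fst (prod_decode (f xs)))"
proof (rule computable_lift1[where h = "\<lambda>n. fst (prod_decode n)"])
  have "(\<exists>b<Suc n. prod_encode (a, b) = n) \<longleftrightarrow> a = fst (prod_decode n)" for a n
    using snd_prod_decode_le[of n]
    by (auto simp: prod_encode_eq_iff prod_eq_iff le_imp_less_Suc intro: exI[of _ "snd (prod_decode n)"])
  then have "(\<Sum>a<Suc n. if \<exists>b<Suc n. prod_encode (a, b) = n then a else 0) = fst (prod_decode n)"
    for n using fst_prod_decode_le[of n] by (simp add: sum.delta')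
  moreover have "computable 1 (\<lambda>xs. \<Sum>a<Suc (xs ! 0).
      if \<exists>b<Suc (xs ! 0). prod_encode (a, b) = xs ! 0 then a else 0)"
    by (intro computable_intros computable_prod_encode | simp)+
  ultimately show "computable 1 (\<lambda>xs. fst (prod_decode (xs ! 0)))" by simp
qed

lemma computable_snd_prod_decode: "computable k f \<Longrightarrow> computable k (\<lambda>xs. snd (prod_decode (f xs)))"
proof (rule computable_lift1[where h = "\<lambda>n. snd (prod_decode n)"])
  have "(\<exists>a<Suc n. prod_encode (a, b) = n) \<longleftrightarrow> b = snd (prod_decode n)" for b n
    using fst_prod_decode_le[of n]
    by (auto simp: prod_encode_eq_iff prod_eq_iff le_imp_less_Suc intro: exI[of _ "fst (prod_decode n)"])
  then have "(\<Sum>b<Suc n. if \<exists>a<Suc n. prod_encode (a, b) = n then b else 0) = snd (prod_decode n)"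
    for n using snd_prod_decode_le[of n] by (simp add: sum.delta')
  moreover have "computable 1 (\<lambda>xs. \<Sum>b<Suc (xs ! 0).
      if \<exists>a<Suc (xs ! 0). prod_encode (a, b) = xs ! 0 then b else 0)"
    by (intro computable_intros computable_prod_encode | simp)+
  ultimately show "computable 1 (\<lambda>xs. snd (prod_decode (xs ! 0)))" by simp
qed

text \<open>On a code \<open>l\<close> of a list, \<open>code_drop l i\<close> is \<open>0\<close>, the code of \<open>[]\<close>, exactly from \<open>i\<close> = length
  on, and \<open>l\<close> bounds the length; so \<open>code_length\<close> counts the nonzero \<open>code_drop l i\<close>.\<close>

definition code_tl :: "nat \<Rightarrow> nat" where
  "code_tl n = snd (prod_decode (n - 1))"

definition code_hd :: "nat \<Rightarrow> nat" where
  "code_hd n = fst (prod_decode (n - 1))"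

definition code_drop :: "nat \<Rightarrow> nat \<Rightarrow> nat" where
  "code_drop l i = rec_nat l (\<lambda>_ r. code_tl r) i"

definition code_nth :: "nat \<Rightarrow> nat \<Rightarrow> nat" where
  "code_nth l i = code_hd (code_drop l i)"

definition code_length :: "nat \<Rightarrow> nat" where
  "code_length l = (\<Sum>i<l. if code_drop l i \<noteq> 0 then 1 else 0)"

definition code_member :: "nat \<Rightarrow> nat \<Rightarrow> bool" where
  "code_member l x \<longleftrightarrow> (\<exists>i<code_length l. code_nth l i = x)"

lemma computable_code_tl: "computable k f \<Longrightarrow> computable k (\<lambda>xs. code_tl (f xs))"
  unfolding code_tl_def by (intro computable_snd_prod_decode computable_intros)

lemma computable_code_hd: "computable k f \<Longrightarrow> computable k (\<lambda>xs. code_hd (f xs))"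
  unfolding code_hd_def by (intro computable_fst_prod_decode computable_intros)

lemma computable_code_drop:
  "computable k f \<Longrightarrow> computable k g \<Longrightarrow> computable k (\<lambda>xs. code_drop (f xs) (g xs))"
proof (rule computable_lift2[where h = code_drop])
  have "computable 2 (\<lambda>xs. rec_nat (xs ! 0) (\<lambda>n r. (\<lambda>ys. code_tl (ys ! 1)) (n # r # xs)) (xs ! 1))"
    by (intro computable_rec_nat computable_code_tl computable_nth) auto
  then show "computable 2 (\<lambda>xs. code_drop (xs ! 0) (xs ! 1))" by (simp add: code_drop_def)
qed

lemma computable_code_nth:
  "computable k f \<Longrightarrow> computable k g \<Longrightarrow> computable k (\<lambda>xs. code_nth (f xs) (g xs))"
  unfolding code_nth_def by (intro computable_code_hd computable_code_drop)

lemma computable_code_length: "computable k f \<Longrightarrow> computable k (\<lambda>xs. code_length (f xs))"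
proof (rule computable_lift1[where h = code_length])
  show "computable 1 (\<lambda>xs. code_length (xs ! 0))"
    unfolding code_length_def by (intro computable_intros computable_code_drop | simp)+
qed

lemma decidable_code_member:
  "computable k f \<Longrightarrow> computable k g \<Longrightarrow> decidable k (\<lambda>xs. code_member (f xs) (g xs))"
proof (rule decidable_lift2[where P = code_member])
  show "decidable 2 (\<lambda>xs. code_member (xs ! 0) (xs ! 1))"
    unfolding code_member_def
    by (intro computable_intros computable_code_nth computable_code_length | simp)+
qed

lemma code_tl_0: "code_tl 0 = 0"
  by (simp add: code_tl_def prod_decode_def prod_decode_aux.simps)

lemma code_tl_Suc_prod_encode: "code_tl (Suc (prod_encode (x, y))) = y"
  by (simp add: code_tl_def)

lemma code_hd_Suc_prod_encode: "code_hd (Suc (prod_encode (x, y))) = x"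
  by (simp add: code_hd_def)

lemma code_drop_list_encode: "code_drop (list_encode xs) i = list_encode (drop i xs)"
proof (induction i)
  case 0
  then show ?case by (simp add: code_drop_def)
next
  case (Suc i)
  then show ?case
    by (cases "drop i xs")
      (simp_all add: code_drop_def code_tl_0 code_tl_Suc_prod_encode drop_Suc tl_drop[symmetric])
qed

lemma code_nth_list_encode: "i < length xs \<Longrightarrow> code_nth (list_encode xs) i = xs ! i"
  by (simp add: code_nth_def code_drop_list_encode Cons_nth_drop_Suc[symmetric] code_hd_Suc_prod_encode)

lemma length_le_list_encode: "length xs \<le> list_encode xs"
  by (induction xs) (auto intro: le_trans[OF _ le_prod_encode_2])

lemma list_encode_eq_0_iff: "list_encode xs = 0 \<longleftrightarrow> xs = []"
  by (cases xs) auto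

lemma code_drop_list_encode_neq_0: "code_drop (list_encode xs) i \<noteq> 0 \<longleftrightarrow> i < length xs"
  by (auto simp: code_drop_list_encode list_encode_eq_0_iff)

lemma code_length_list_encode: "code_length (list_encode xs) = length xs"
  unfolding code_length_def code_drop_list_encode_neq_0
  by (rule sum_indicator_less[OF length_le_list_encode])

lemma code_member_list_encode: "code_member (list_encode xs) x \<longleftrightarrow> x \<in> set xs"
  unfolding code_member_def code_length_list_encode
  by (auto simp: code_nth_list_encode in_set_conv_nth)

lemma list_encode_le_replicate:
  "\<forall>j\<in>set js. j \<le> n \<Longrightarrow> list_encode js \<le> list_encode (replicate (length js) n)"
  by (induction js) (auto intro: prod_encode_mono)

lemma map_code_nth_list_encode: "map (code_nth (list_encode js)) [0..<length js] = js"
  by (rule nth_equalityI) (auto simp: code_nth_list_encode)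

lemma all_nth_in_iff_lists: "(\<forall>i<length w. w ! i \<in> A) \<longleftrightarrow> w \<in> lists A"
  by (auto simp: in_set_conv_nth[where xs = w] intro: nth_mem)

lemma computable_list_encode_replicate:
  "computable k f \<Longrightarrow> computable k g \<Longrightarrow> computable k (\<lambda>xs. list_encode (replicate (f xs) (g xs)))"
proof (rule computable_lift2[where h = "\<lambda>T n. list_encode (replicate T n)"])
  have rec: "rec_nat 0 (\<lambda>_ r. Suc (prod_encode (n, r))) T = list_encode (replicate T n)" for n T
    by (induction T) auto
  have "computable 2
      (\<lambda>xs. rec_nat 0 (\<lambda>n r. (\<lambda>ys. Suc (prod_encode (ys ! 3, ys ! 1))) (n # r # xs)) (xs ! 0))"
    by (intro computable_rec_nat computable_intros computable_prod_encode | simp)+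
  then show "computable 2 (\<lambda>xs. list_encode (replicate (xs ! 0) (xs ! 1)))"
    by (simp add: rec)
qed

section \<open>Free reduction on base-5 codes of words\<close>

text \<open>A word is coded by its base-5 expansion, first letter least significant, with the four
  letters as the nonzero digits; so the code of a word determines its length.\<close>

definition letter_code :: "gen2 \<Rightarrow> nat" where
  "letter_code g = 1 + (if fst g then 2 else 0) + (if snd g then 1 else 0)"

fun word_code :: "gen2 list \<Rightarrow> nat" where
  "word_code [] = 0"
| "word_code (g # w) = letter_code g + 5 * word_code w"

definition inv_letter_code :: "nat \<Rightarrow> nat" where
  "inv_letter_code d =
    (if d = 1 then 2 else if d = 2 then 1 else if d = 3 then 4 else if d = 4 then 3 else 0)"

definition cancel_cons :: "gen2 \<Rightarrow> gen2 list \<Rightarrow> gen2 list" where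
  "cancel_cons g r = (case r of [] \<Rightarrow> [g] | h # r' \<Rightarrow> (if h = inv_gen g then r' else g # h # r'))"

definition code_cancel_cons :: "nat \<Rightarrow> nat \<Rightarrow> nat" where
  "code_cancel_cons d n =
    (if d = 0 then n else if n mod 5 = inv_letter_code d then n div 5 else d + 5 * n)"

definition digit5 :: "nat \<Rightarrow> nat \<Rightarrow> nat" where
  "digit5 n i = n div 5 ^ i mod 5"

text \<open>\<open>code_mult x m\<close> prepends the digits of \<open>x\<close> to \<open>m\<close>, last digit first, by \<open>code_cancel_cons\<close>.
  The number \<open>x\<close> bounds its own number of digits, and the surplus zero digits are no-ops.\<close>

definition code_mult :: "nat \<Rightarrow> nat \<Rightarrow> nat" where
  "code_mult x m = rec_nat m (\<lambda>t r. code_cancel_cons (digit5 x (x - Suc t)) r) x"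

lemma letter_code_bounds: "letter_code g \<noteq> 0" "letter_code g < 5"
  by (auto simp: letter_code_def)

lemma letter_code_eq_iff: "letter_code g = letter_code h \<longleftrightarrow> g = h"
  by (cases g; cases h) (auto simp: letter_code_def)

lemma inv_letter_code_eq: "inv_letter_code (letter_code g) = letter_code (inv_gen g)"
  by (cases g) (auto simp: letter_code_def inv_letter_code_def inv_gen_def)

lemma word_code_eq_0_iff: "word_code x = 0 \<longleftrightarrow> x = []"
  using letter_code_bounds by (cases x) auto

lemma word_code_cancel_cons:
  "word_code (cancel_cons g r) = code_cancel_cons (letter_code g) (word_code r)"
proof (cases r)
  case Nil
  then show ?thesis using letter_code_bounds[of g] letter_code_bounds[of "inv_gen g"]
    by (simp add: cancel_cons_def code_cancel_cons_def inv_letter_code_eq)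
next
  case (Cons h r')
  have "(letter_code h + 5 * word_code r') mod 5 = letter_code h"
    and "(letter_code h + 5 * word_code r') div 5 = word_code r'"
    using letter_code_bounds[of h] by simp_all
  then show ?thesis
    using Cons letter_code_bounds[of g] letter_code_bounds[of "inv_gen g"]
      letter_code_eq_iff[of h "inv_gen g"]
    by (simp add: cancel_cons_def code_cancel_cons_def inv_letter_code_eq)
qed

lemma digit5_word_code: "digit5 (word_code x) i = (if i < length x then letter_code (x ! i) else 0)"
proof (induction x arbitrary: i)
  case Nil
  then show ?case by (simp add: digit5_def)
next
  case (Cons g x)
  show ?case
  proof (cases i)
    case 0
    then show ?thesis using letter_code_bounds[of g] by (simp add: digit5_def)
  next
    case (Suc j)
    have "(letter_code g + 5 * word_code x) div 5 ^ Suc j = word_code x div 5 ^ j"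
      using letter_code_bounds[of g] by (simp add: div_mult2_eq)
    then show ?thesis using Cons.IH[of j] Suc by (simp add: digit5_def)
  qed
qed

lemma length_le_word_code: "length x \<le> word_code x"
proof (induction x)
  case (Cons g x)
  then show ?case using letter_code_bounds(1)[of g] by simp
qed simp

lemma code_mult_prefix:
  assumes "t \<le> word_code x"
  shows "rec_nat (word_code m) (\<lambda>t r. code_cancel_cons (digit5 (word_code x) (word_code x - Suc t)) r) t
    = word_code (foldr cancel_cons (drop (word_code x - t) x) m)"
  using assms
proof (induction t)
  case 0
  then show ?case using length_le_word_code[of x] by simp
next
  case (Suc t)
  define j where "j = word_code x - Suc t"
  then have j: "word_code x - t = Suc j" using Suc.prems by simp
  show ?case
  proof (cases "j < length x")
    case True
    then have "drop j x = x ! j # drop (Suc j) x" by (simp add: Cons_nth_drop_Suc)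
    then show ?thesis
      using Suc True by (simp add: j_def [symmetric] j digit5_word_code word_code_cancel_cons)
  next
    case False
    then show ?thesis using Suc by (simp add: j_def [symmetric] j digit5_word_code code_cancel_cons_def)
  qed
qed

lemma code_mult_word_code: "code_mult (word_code x) (word_code m) = word_code (foldr cancel_cons x m)"
  using code_mult_prefix[of "word_code x" x m] by (simp add: code_mult_def)

lemma red_Cons_cancel_cons: "red (g # w) = cancel_cons g (red w)"
  by (simp add: cancel_cons_def split: list.splits)

lemma red_append_foldr: "red (u @ v) = foldr cancel_cons u (red v)"
  by (induction u) (auto simp del: red.simps simp add: red_Cons_cancel_cons)

lemma reduced_Cons: "reduced (g # w) \<longleftrightarrow> reduced w \<and> (w = [] \<or> hd w \<noteq> inv_gen g)"
proof
  assume r: "reduced (g # w)"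
  have "reduced w" unfolding reduced_def
  proof (intro allI impI)
    fix i assume "Suc i < length w"
    then show "w ! Suc i \<noteq> inv_gen (w ! i)"
      using r[unfolded reduced_def, rule_format, of "Suc i"] by simp
  qed
  moreover have "w = [] \<or> hd w \<noteq> inv_gen g"
    using r[unfolded reduced_def, rule_format, of 0] by (cases w) auto
  ultimately show "reduced w \<and> (w = [] \<or> hd w \<noteq> inv_gen g)" by blast
next
  assume "reduced w \<and> (w = [] \<or> hd w \<noteq> inv_gen g)"
  then show "reduced (g # w)" unfolding reduced_def
  proof (intro allI impI)
    fix i assume "Suc i < length (g # w)"
    with \<open>reduced w \<and> (w = [] \<or> hd w \<noteq> inv_gen g)\<close> show "(g # w) ! Suc i \<noteq> inv_gen ((g # w) ! i)"
      unfolding reduced_def by (cases i; cases w) auto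
  qed
qed

lemma red_reduced: "reduced w \<Longrightarrow> red w = w"
proof (induction w)
  case Nil
  then show ?case by simp
next
  case (Cons g w)
  then have "reduced w" and "w = [] \<or> hd w \<noteq> inv_gen g" by (auto simp: reduced_Cons)
  with Cons.IH show ?case by (cases w) (auto simp: red_Cons_cancel_cons cancel_cons_def)
qed

lemma reduced_cancel_cons: "reduced r \<Longrightarrow> reduced (cancel_cons g r)"
  by (cases r) (auto simp: cancel_cons_def reduced_Cons)

lemma reduced_red: "reduced (red w)"
proof (induction w)
  case Nil
  then show ?case by (simp add: reduced_def)
next
  case (Cons g w)
  then show ?case by (simp only: red_Cons_cancel_cons reduced_cancel_cons)
qed

lemma code_mult_eq_red: "reduced m \<Longrightarrow> code_mult (word_code x) (word_code m) = word_code (red (x @ m))"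
  by (simp add: code_mult_word_code red_append_foldr red_reduced)

lemma computable_digit5:
  "computable k f \<Longrightarrow> computable k g \<Longrightarrow> computable k (\<lambda>xs. digit5 (f xs) (g xs))"
  unfolding digit5_def by (intro computable_mod computable_div computable_power computable_intros)

lemma computable_code_cancel_cons:
  "computable k f \<Longrightarrow> computable k g \<Longrightarrow> computable k (\<lambda>xs. code_cancel_cons (f xs) (g xs))"
  unfolding code_cancel_cons_def inv_letter_code_def
  by (intro computable_mod computable_div computable_intros | assumption)+

lemma computable_code_mult:
  "computable k f \<Longrightarrow> computable k g \<Longrightarrow> computable k (\<lambda>xs. code_mult (f xs) (g xs))"
proof (rule computable_lift2[where h = code_mult])
  have "computable 2 (\<lambda>xs. rec_nat (xs ! 1)
      (\<lambda>n r. (\<lambda>ys. code_cancel_cons (digit5 (ys ! 2) (ys ! 2 - Suc (ys ! 0))) (ys ! 1)) (n # r # xs))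
      (xs ! 0))"
    by (intro computable_rec_nat computable_code_cancel_cons computable_digit5 computable_intros) auto
  then show "computable 2 (\<lambda>xs. code_mult (xs ! 0) (xs ! 1))" by (simp add: code_mult_def)
qed

section \<open>Computations as runs guided by transition indices\<close>

type_synonym 'g transition = "nat \<times> nat option \<times> nat \<times> 'g"

text \<open>A configuration is (state, input position, register, success flag).  A run is guided by
  a list of indices into a list of transitions: an index out of range is a no-op, so that runs can
  be padded to a fixed length, and an inapplicable transition clears the flag for good.\<close>

type_synonym 'g config = "nat \<times> nat \<times> 'g \<times> bool"

definition lists_transitions ::
  "(nat \<Rightarrow> nat option \<Rightarrow> (nat \<times> 'g) set) \<Rightarrow> 'g transition list \<Rightarrow> bool" where
  "lists_transitions \<delta> trs \<longleftrightarrow> set trs = {(q, s, q', m). (q', m) \<in> \<delta> q s}"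

definition guided_step ::
  "('g, 'm) monoid_scheme \<Rightarrow> 'g transition list \<Rightarrow> nat list \<Rightarrow> nat \<Rightarrow> 'g config \<Rightarrow> 'g config" where
  "guided_step G trs w j st = (case st of (q, pos, x, ok) \<Rightarrow>
     (if \<not> ok \<or> length trs \<le> j then st else
      (case trs ! j of (p, s, p', m) \<Rightarrow>
        if p = q \<and> (s = None \<or> (pos < length w \<and> s = Some (w ! pos)))
        then (p', if s = None then pos else Suc pos, x \<otimes>\<^bsub>G\<^esub> m, True)
        else (q, pos, x, False))))"

definition guided_run ::
  "('g, 'm) monoid_scheme \<Rightarrow> 'g transition list \<Rightarrow> nat list \<Rightarrow> nat list \<Rightarrow> 'g config \<Rightarrow> 'g config" where
  "guided_run G trs w js st = foldl (\<lambda>st j. guided_step G trs w j st) st js"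

definition accepting_config :: "('g, 'm) monoid_scheme \<Rightarrow> nat set \<Rightarrow> nat list \<Rightarrow> 'g config \<Rightarrow> bool" where
  "accepting_config G Qa w st \<longleftrightarrow>
     (case st of (q, pos, x, ok) \<Rightarrow> ok \<and> pos = length w \<and> q \<in> Qa \<and> x = \<one>\<^bsub>G\<^esub>)"

lemma lists_transitions_iff:
  "lists_transitions \<delta> trs \<Longrightarrow> (q, s, q', m) \<in> set trs \<longleftrightarrow> (q', m) \<in> \<delta> q s"
  by (simp add: lists_transitions_def)

lemma guided_run_Nil [simp]: "guided_run G trs w [] st = st"
  by (simp add: guided_run_def)

lemma guided_run_Cons:
  "guided_run G trs w (j # js) st = guided_run G trs w js (guided_step G trs w j st)"
  by (simp add: guided_run_def)

lemma guided_run_append: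
  "guided_run G trs w (js @ ks) st = guided_run G trs w ks (guided_run G trs w js st)"
  by (simp add: guided_run_def)

lemma guided_run_failed: "guided_run G trs w js (q, pos, x, False) = (q, pos, x, False)"
  by (induction js) (simp_all add: guided_run_Cons guided_step_def)

lemma guided_run_skip: "\<forall>j\<in>set js. length trs \<le> j \<Longrightarrow> guided_run G trs w js st = st"
  by (induction js) (auto simp: guided_run_Cons guided_step_def split: prod.splits)

lemma guided_run_min: "guided_run G trs w (map (min (length trs)) js) st = guided_run G trs w js st"
proof (induction js arbitrary: st)
  case (Cons j js)
  have "guided_step G trs w (min (length trs) j) st = guided_step G trs w j st"
    by (cases "length trs \<le> j") (auto simp: guided_step_def min_def split: prod.splits)
  then show ?case using Cons by (simp add: guided_run_Cons)
qed simp

lemma guided_step_successful_cases: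
  assumes "guided_step G trs w j (q, pos, x, True) = (q1, pos1, x1, True)"
  obtains (skip) "q1 = q" "pos1 = pos" "x1 = x"
  | (eps) m where "(q, None, q1, m) \<in> set trs" "pos1 = pos" "x1 = x \<otimes>\<^bsub>G\<^esub> m"
  | (read) m where "pos < length w" "(q, Some (w ! pos), q1, m) \<in> set trs" "pos1 = Suc pos"
      "x1 = x \<otimes>\<^bsub>G\<^esub> m"
proof (cases "length trs \<le> j")
  case True
  then show ?thesis using assms skip by (simp add: guided_step_def)
next
  case False
  obtain p s p' m where t: "trs ! j = (p, s, p', m)" by (cases "trs ! j") auto
  with False have mem: "(p, s, p', m) \<in> set trs" by (metis not_le nth_mem)
  from assms False t have "p = q" "s = None \<or> (pos < length w \<and> s = Some (w ! pos))"
    and "q1 = p'" "pos1 = (if s = None then pos else Suc pos)" "x1 = x \<otimes>\<^bsub>G\<^esub> m"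
    by (simp_all add: guided_step_def split: if_split_asm)
  then show ?thesis using mem eps read by (cases s) auto
qed

lemma comp_imp_guided_run:
  assumes tr: "lists_transitions \<delta> trs"
    and "comp G \<delta> q u x n q' x'" and "drop pos w = u" and "pos \<le> length w"
  shows "\<exists>js. length js = n \<and> (\<forall>j\<in>set js. j < length trs) \<and>
    guided_run G trs w js (q, pos, x, True) = (q', length w, x', True)"
  using assms(2-)
proof (induction arbitrary: pos rule: comp.induct)
  case (comp_nil q x)
  then show ?case by (intro exI[of _ "[]"]) auto
next
  case (comp_read q1 m q a u' x n q' x')
  obtain j where j: "j < length trs" "trs ! j = (q, Some a, q1, m)"
    using comp_read.hyps(1) lists_transitions_iff[OF tr] by (metis in_set_conv_nth)
  have pos: "pos < length w" using comp_read.prems by (cases "pos < length w") auto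
  then have "w ! pos = a" and rest: "drop (Suc pos) w = u'"
    using comp_read.prems by (auto simp: Cons_nth_drop_Suc[symmetric])
  moreover obtain js where "length js = n" "\<forall>j\<in>set js. j < length trs"
      "guided_run G trs w js (q1, Suc pos, x \<otimes>\<^bsub>G\<^esub> m, True) = (q', length w, x', True)"
    using comp_read.IH[OF rest] pos by auto
  ultimately show ?case using j pos
    by (intro exI[of _ "j # js"]) (simp add: guided_run_Cons guided_step_def)
next
  case (comp_eps q1 m q u' x n q' x')
  obtain j where j: "j < length trs" "trs ! j = (q, None, q1, m)"
    using comp_eps.hyps(1) lists_transitions_iff[OF tr] by (metis in_set_conv_nth)
  obtain js where "length js = n" "\<forall>j\<in>set js. j < length trs"
      "guided_run G trs w js (q1, pos, x \<otimes>\<^bsub>G\<^esub> m, True) = (q', length w, x', True)"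
    using comp_eps.IH comp_eps.prems by auto
  then show ?case using j by (intro exI[of _ "j # js"]) (simp add: guided_run_Cons guided_step_def)
qed

lemma guided_run_imp_comp:
  assumes tr: "lists_transitions \<delta> trs"
  shows "guided_run G trs w js (q, pos, x, True) = (q', length w, x', True) \<Longrightarrow>
    \<exists>n\<le>length js. comp G \<delta> q (drop pos w) x n q' x'"
proof (induction js arbitrary: q pos x)
  case Nil
  then show ?case by (auto intro: comp_nil)
next
  case (Cons j js)
  obtain q1 pos1 x1 ok where step: "guided_step G trs w j (q, pos, x, True) = (q1, pos1, x1, ok)"
    by (cases "guided_step G trs w j (q, pos, x, True)") auto
  with Cons.prems have ok
    by (cases ok) (auto simp: guided_run_Cons guided_run_failed)
  with Cons.prems step have "guided_run G trs w js (q1, pos1, x1, True) = (q', length w, x', True)"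
    by (simp add: guided_run_Cons)
  then obtain n where n: "n \<le> length js" "comp G \<delta> q1 (drop pos1 w) x1 n q' x'"
    using Cons.IH by blast
  from step \<open>ok\<close> have "guided_step G trs w j (q, pos, x, True) = (q1, pos1, x1, True)"
    by simp
  then show ?case
  proof (cases rule: guided_step_successful_cases)
    case skip
    then show ?thesis using n by (metis le_SucI length_Cons)
  next
    case (eps m)
    then have "comp G \<delta> q (drop pos w) x (Suc n) q' x'"
      using n lists_transitions_iff[OF tr] by (auto intro: comp_eps)
    then show ?thesis using n by auto
  next
    case (read m)
    then have "comp G \<delta> q (w ! pos # drop (Suc pos) w) x (Suc n) q' x'"
      using n lists_transitions_iff[OF tr] by (auto intro: comp_read)
    then show ?thesis using n read by (auto simp: Cons_nth_drop_Suc)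
  qed
qed

lemma accepts_within_iff_guided_run:
  assumes tr: "lists_transitions \<delta> trs"
  shows "accepts_within G \<delta> q0 Qa w T \<longleftrightarrow>
    (\<exists>js. length js = T \<and> (\<forall>j\<in>set js. j \<le> length trs) \<and>
      accepting_config G Qa w (guided_run G trs w js (q0, 0, \<one>\<^bsub>G\<^esub>, True)))"
proof
  assume "accepts_within G \<delta> q0 Qa w T"
  then obtain n q where c: "comp G \<delta> q0 w \<one>\<^bsub>G\<^esub> n q \<one>\<^bsub>G\<^esub>" "q \<in> Qa" "n \<le> T"
    unfolding accepts_within_def by blast
  obtain js where js: "length js = n" "\<forall>j\<in>set js. j < length trs"
      "guided_run G trs w js (q0, 0, \<one>\<^bsub>G\<^esub>, True) = (q, length w, \<one>\<^bsub>G\<^esub>, True)"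
    using comp_imp_guided_run[OF tr c(1), of 0] by auto
  let ?padded = "js @ replicate (T - n) (length trs)"
  have "guided_run G trs w ?padded (q0, 0, \<one>\<^bsub>G\<^esub>, True) = (q, length w, \<one>\<^bsub>G\<^esub>, True)"
    using js(3) by (simp add: guided_run_append guided_run_skip)
  then show "\<exists>js. length js = T \<and> (\<forall>j\<in>set js. j \<le> length trs) \<and>
      accepting_config G Qa w (guided_run G trs w js (q0, 0, \<one>\<^bsub>G\<^esub>, True))"
    using js c by (intro exI[of _ ?padded]) (auto simp: accepting_config_def)
next
  assume "\<exists>js. length js = T \<and> (\<forall>j\<in>set js. j \<le> length trs) \<and>
      accepting_config G Qa w (guided_run G trs w js (q0, 0, \<one>\<^bsub>G\<^esub>, True))"
  then obtain js where js: "length js = T"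
      "accepting_config G Qa w (guided_run G trs w js (q0, 0, \<one>\<^bsub>G\<^esub>, True))"
    by blast
  obtain q pos x ok where "guided_run G trs w js (q0, 0, \<one>\<^bsub>G\<^esub>, True) = (q, pos, x, ok)"
    by (cases "guided_run G trs w js (q0, 0, \<one>\<^bsub>G\<^esub>, True)")
  with js have "q \<in> Qa"
    and "guided_run G trs w js (q0, 0, \<one>\<^bsub>G\<^esub>, True) = (q, length w, \<one>\<^bsub>G\<^esub>, True)"
    by (auto simp: accepting_config_def)
  with js(1) show "accepts_within G \<delta> q0 Qa w T"
    using guided_run_imp_comp[OF tr] unfolding accepts_within_def by fastforce
qed

section \<open>Arithmetization of guided runs over \<open>F\<^sub>2 \<times> F\<^sub>2\<close>\<close>

abbreviation F2xF2 :: "(gen2 list \<times> gen2 list) monoid" where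
  "F2xF2 \<equiv> free_group2 \<times>\<times> free_group2"

lemma free_group2_mult [simp]: "x \<otimes>\<^bsub>free_group2\<^esub> y = red (x @ y)"
  by (simp add: free_group2_def)

lemma free_group2_one [simp]: "\<one>\<^bsub>free_group2\<^esub> = []"
  by (simp add: free_group2_def)

lemma free_group2_carrier [simp]: "carrier free_group2 = {w. reduced w}"
  by (simp add: free_group2_def)

lemma F2xF2_mult: "(x1, x2) \<otimes>\<^bsub>F2xF2\<^esub> (m1, m2) = (red (x1 @ m1), red (x2 @ m2))"
  by (simp add: DirProd_def)

lemma F2xF2_one: "\<one>\<^bsub>F2xF2\<^esub> = ([], [])"
  by (simp add: DirProd_def)

lemma F2xF2_carrier: "carrier F2xF2 = {w. reduced w} \<times> {w. reduced w}"
  by (simp add: DirProd_def)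

definition label_code :: "nat option \<Rightarrow> nat" where
  "label_code s = (case s of None \<Rightarrow> 0 | Some a \<Rightarrow> Suc a)"

definition transition_code :: "(gen2 list \<times> gen2 list) transition \<Rightarrow> nat" where
  "transition_code t = (case t of (p, s, p', (m1, m2)) \<Rightarrow>
     list_encode [p, label_code s, p', word_code m1, word_code m2])"

text \<open>The code of an automaton with transition list \<open>trs\<close>, initial state \<open>q0\<close>, accepting
  states \<open>Qa\<close>, alphabet \<open>Sg\<close> and time bound \<open>c n + c\<close>.\<close>

definition automaton_code ::
  "(gen2 list \<times> gen2 list) transition list \<Rightarrow> nat \<Rightarrow> nat list \<Rightarrow> nat list \<Rightarrow> nat \<Rightarrow> nat" where
  "automaton_code trs q0 Qa Sg c =
     list_encode [list_encode (map transition_code trs), q0, list_encode Qa, list_encode Sg, c]"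

definition config_code :: "nat \<Rightarrow> nat \<Rightarrow> nat \<Rightarrow> nat \<Rightarrow> nat \<Rightarrow> nat" where
  "config_code q pos x1 x2 ok =
    prod_encode (q, prod_encode (pos, prod_encode (x1, prod_encode (x2, ok))))"

definition cfg_state :: "nat \<Rightarrow> nat" where
  "cfg_state s = fst (prod_decode s)"

definition cfg_pos :: "nat \<Rightarrow> nat" where
  "cfg_pos s = fst (prod_decode (snd (prod_decode s)))"

definition cfg_reg1 :: "nat \<Rightarrow> nat" where
  "cfg_reg1 s = fst (prod_decode (snd (prod_decode (snd (prod_decode s)))))"

definition cfg_reg2 :: "nat \<Rightarrow> nat" where
  "cfg_reg2 s = fst (prod_decode (snd (prod_decode (snd (prod_decode (snd (prod_decode s)))))))"

definition cfg_ok :: "nat \<Rightarrow> nat" where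
  "cfg_ok s = snd (prod_decode (snd (prod_decode (snd (prod_decode (snd (prod_decode s)))))))"

lemma cfg_config_code [simp]:
  "cfg_state (config_code q p x1 x2 ok) = q" "cfg_pos (config_code q p x1 x2 ok) = p"
  "cfg_reg1 (config_code q p x1 x2 ok) = x1" "cfg_reg2 (config_code q p x1 x2 ok) = x2"
  "cfg_ok (config_code q p x1 x2 ok) = ok"
  by (simp_all add: config_code_def cfg_state_def cfg_pos_def cfg_reg1_def cfg_reg2_def cfg_ok_def)

definition code_transitions :: "nat \<Rightarrow> nat" where
  "code_transitions a = code_nth a 0"

definition code_num_transitions :: "nat \<Rightarrow> nat" where
  "code_num_transitions a = code_length (code_transitions a)"

definition code_field :: "nat \<Rightarrow> nat \<Rightarrow> nat \<Rightarrow> nat" where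
  "code_field a j f = code_nth (code_nth (code_transitions a) j) f"

definition code_step :: "nat \<Rightarrow> nat \<Rightarrow> nat \<Rightarrow> nat \<Rightarrow> nat" where
  "code_step a wc j s =
    (if cfg_ok s = 0 \<or> code_num_transitions a \<le> j then s
     else if code_field a j 0 = cfg_state s \<and>
        (code_field a j 1 = 0 \<or> (code_drop wc (cfg_pos s) \<noteq> 0 \<and>
           code_field a j 1 = Suc (code_hd (code_drop wc (cfg_pos s)))))
     then config_code (code_field a j 2) (if code_field a j 1 = 0 then cfg_pos s else Suc (cfg_pos s))
       (code_mult (cfg_reg1 s) (code_field a j 3)) (code_mult (cfg_reg2 s) (code_field a j 4)) 1
     else config_code (cfg_state s) (cfg_pos s) (cfg_reg1 s) (cfg_reg2 s) 0)"

definition code_run :: "nat \<Rightarrow> nat \<Rightarrow> nat \<Rightarrow> nat \<Rightarrow> nat" where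
  "code_run a wc cert n =
    rec_nat (config_code (code_nth a 1) 0 0 0 1) (\<lambda>t s. code_step a wc (code_nth cert t) s) n"

definition code_accepting :: "nat \<Rightarrow> nat \<Rightarrow> nat \<Rightarrow> bool" where
  "code_accepting a wc s \<longleftrightarrow> cfg_ok s \<noteq> 0 \<and> code_drop wc (cfg_pos s) = 0 \<and>
     code_member (code_nth a 2) (cfg_state s) \<and> cfg_reg1 s = 0 \<and> cfg_reg2 s = 0"

definition code_time_bound :: "nat \<Rightarrow> nat \<Rightarrow> nat" where
  "code_time_bound a wc = code_nth a 4 * code_length wc + code_nth a 4"

text \<open>The certificate \<open>cert\<close> codes the list of transition indices guiding the run.  Indices up to
  the number \<open>n\<close> of transitions suffice, and the codes of all such lists of length \<open>T\<close> are
  bounded by that of \<open>replicate T n\<close>.\<close>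

definition code_accepts :: "nat \<Rightarrow> nat \<Rightarrow> bool" where
  "code_accepts a wc \<longleftrightarrow> (\<forall>i<code_length wc. code_member (code_nth a 3) (code_nth wc i)) \<and>
     (\<exists>cert<Suc (list_encode (replicate (code_time_bound a wc) (code_num_transitions a))).
        code_accepting a wc (code_run a wc cert (code_time_bound a wc)))"

definition config_encode :: "(gen2 list \<times> gen2 list) config \<Rightarrow> nat" where
  "config_encode st = (case st of (q, pos, (x1, x2), ok) \<Rightarrow>
     config_code q pos (word_code x1) (word_code x2) (if ok then 1 else 0))"

definition config_invariant :: "nat list \<Rightarrow> (gen2 list \<times> gen2 list) config \<Rightarrow> bool" where
  "config_invariant w st \<longleftrightarrow>
     (case st of (q, pos, (x1, x2), ok) \<Rightarrow> reduced x1 \<and> reduced x2 \<and> pos \<le> length w)"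

definition reduced_labels :: "(gen2 list \<times> gen2 list) transition list \<Rightarrow> bool" where
  "reduced_labels trs \<longleftrightarrow> (\<forall>(p, s, p', m) \<in> set trs. m \<in> carrier F2xF2)"

lemma automaton_code_fields:
  assumes "a = automaton_code trs q0 Qa Sg c"
  shows "code_transitions a = list_encode (map transition_code trs)"
    "code_num_transitions a = length trs" "code_nth a 1 = q0" "code_nth a 2 = list_encode Qa"
    "code_nth a 3 = list_encode Sg" "code_nth a 4 = c"
  using assms
  by (simp_all del: list_encode.simps
      add: automaton_code_def code_transitions_def code_num_transitions_def
        code_nth_list_encode code_length_list_encode)

lemma code_field_automaton_code:
  assumes "a = automaton_code trs q0 Qa Sg c" and "j < length trs" and "trs ! j = (p, s, p', (m1, m2))"
  shows "code_field a j 0 = p" "code_field a j 1 = label_code s" "code_field a j 2 = p'"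
    "code_field a j 3 = word_code m1" "code_field a j 4 = word_code m2"
  using assms(2,3) unfolding code_field_def automaton_code_fields(1)[OF assms(1)]
  by (simp_all del: list_encode.simps add: code_nth_list_encode transition_code_def)

lemma label_code_eq_iff: "label_code s = 0 \<longleftrightarrow> s = None" "label_code s = Suc b \<longleftrightarrow> s = Some b"
  by (auto simp: label_code_def split: option.splits)

lemma code_step_correct:
  assumes a: "a = automaton_code trs q0 Qa Sg c" and labels: "reduced_labels trs"
    and inv: "config_invariant w st"
  shows "code_step a (list_encode w) j (config_encode st) = config_encode (guided_step F2xF2 trs w j st)
    \<and> config_invariant w (guided_step F2xF2 trs w j st)"
proof -
  obtain q pos x1 x2 ok where st: "st = (q, pos, (x1, x2), ok)" by (cases st) auto
  have x: "reduced x1" "reduced x2" "pos \<le> length w" using inv st by (auto simp: config_invariant_def)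
  note nt = automaton_code_fields(2)[OF a]
  show ?thesis
  proof (cases "\<not> ok \<or> length trs \<le> j")
    case True
    then show ?thesis using inv by (auto simp: code_step_def guided_step_def st config_encode_def nt)
  next
    case False
    then have ok and j: "j < length trs" by auto
    obtain p s p' m1 m2 where t: "trs ! j = (p, s, p', (m1, m2))" by (cases "trs ! j") auto
    have m: "reduced m1" "reduced m2"
      using labels nth_mem[OF j] t unfolding reduced_labels_def F2xF2_carrier by fastforce+
    have letter: "(label_code s = 0 \<or> (code_drop (list_encode w) pos \<noteq> 0 \<and>
          label_code s = Suc (code_hd (code_drop (list_encode w) pos))))
        \<longleftrightarrow> (s = None \<or> (pos < length w \<and> s = Some (w ! pos)))"
      using code_drop_list_encode_neq_0[of w pos] code_nth_list_encode[of pos w]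
      by (auto simp: label_code_eq_iff code_nth_def)
    show ?thesis
      using \<open>ok\<close> j t code_field_automaton_code[OF a j t] letter m x
      by (auto simp: code_step_def guided_step_def st config_encode_def nt F2xF2_mult code_mult_eq_red
          config_invariant_def reduced_red label_code_eq_iff)
  qed
qed

abbreviation initial_config :: "nat \<Rightarrow> (gen2 list \<times> gen2 list) config" where
  "initial_config q0 \<equiv> (q0, 0, ([], []), True)"

lemma code_run_correct:
  assumes a: "a = automaton_code trs q0 Qa Sg c" and labels: "reduced_labels trs"
  shows "code_run a (list_encode w) cert T =
      config_encode (guided_run F2xF2 trs w (map (code_nth cert) [0..<T]) (initial_config q0))
    \<and> config_invariant w (guided_run F2xF2 trs w (map (code_nth cert) [0..<T]) (initial_config q0))"
proof (induction T)
  case 0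
  then show ?case
    using automaton_code_fields[OF a]
    by (simp add: code_run_def config_encode_def config_invariant_def reduced_def)
next
  case (Suc T)
  then show ?case
    using code_step_correct[OF a labels]
    by (simp add: code_run_def guided_run_append guided_run_Cons)
qed

lemma code_accepting_correct:
  assumes a: "a = automaton_code trs q0 Qa Sg c" and inv: "config_invariant w st"
  shows "code_accepting a (list_encode w) (config_encode st) \<longleftrightarrow> accepting_config F2xF2 (set Qa) w st"
proof -
  obtain q pos x1 x2 ok where st: "st = (q, pos, (x1, x2), ok)" by (cases st) auto
  have "code_drop (list_encode w) pos = 0 \<longleftrightarrow> pos = length w"
    using code_drop_list_encode_neq_0[of w pos] inv st by (auto simp: config_invariant_def)
  then show ?thesis using automaton_code_fields[OF a]
    by (auto simp: code_accepting_def accepting_config_def st config_encode_def code_member_list_encode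
        word_code_eq_0_iff F2xF2_one)
qed

lemma ex_certificate_iff:
  assumes P_min: "\<And>js. P (map (min n) js) \<longleftrightarrow> P js"
  shows "(\<exists>cert<Suc (list_encode (replicate T n)). P (map (code_nth cert) [0..<T])) \<longleftrightarrow>
    (\<exists>js. length js = T \<and> (\<forall>j\<in>set js. j \<le> n) \<and> P js)"
proof
  assume "\<exists>cert<Suc (list_encode (replicate T n)). P (map (code_nth cert) [0..<T])"
  then obtain cert where "P (map (code_nth cert) [0..<T])" by blast
  then have "P (map (min n) (map (code_nth cert) [0..<T]))" by (simp only: P_min)
  moreover have "length (map (min n) (map (code_nth cert) [0..<T])) = T" by simp
  moreover have "\<forall>j\<in>set (map (min n) (map (code_nth cert) [0..<T])). j \<le> n" by simp
  ultimately show "\<exists>js. length js = T \<and> (\<forall>j\<in>set js. j \<le> n) \<and> P js" by blast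
next
  assume "\<exists>js. length js = T \<and> (\<forall>j\<in>set js. j \<le> n) \<and> P js"
  then obtain js where js: "length js = T" "\<forall>j\<in>set js. j \<le> n" "P js" by blast
  have "list_encode js < Suc (list_encode (replicate T n))"
    using list_encode_le_replicate[OF js(2)] js(1) by simp
  moreover have "map (code_nth (list_encode js)) [0..<T] = js"
    using map_code_nth_list_encode[of js] js(1) by simp
  ultimately show "\<exists>cert<Suc (list_encode (replicate T n)). P (map (code_nth cert) [0..<T])"
    using js(3) by metis
qed

lemma code_accepts_iff:
  assumes a: "a = automaton_code trs q0 Qa Sg c" and labels: "reduced_labels trs"
    and tr: "lists_transitions \<delta> trs"
  shows "code_accepts a (list_encode w) \<longleftrightarrow>
    w \<in> lists (set Sg) \<and> accepts_within F2xF2 \<delta> q0 (set Qa) w (c * length w + c)"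
proof -
  note fields = automaton_code_fields[OF a]
  let ?T = "c * length w + c"
  let ?accepting =
    "\<lambda>js. accepting_config F2xF2 (set Qa) w (guided_run F2xF2 trs w js (initial_config q0))"
  have "code_accepting a (list_encode w) (code_run a (list_encode w) cert ?T) \<longleftrightarrow>
      ?accepting (map (code_nth cert) [0..<?T])" for cert
    using code_run_correct[OF a labels] code_accepting_correct[OF a] by simp
  then have "(\<exists>cert<Suc (list_encode (replicate ?T (length trs))).
        code_accepting a (list_encode w) (code_run a (list_encode w) cert ?T))
      \<longleftrightarrow> (\<exists>js. length js = ?T \<and> (\<forall>j\<in>set js. j \<le> length trs) \<and> ?accepting js)"
    using ex_certificate_iff[of ?accepting "length trs" ?T] by (simp only: guided_run_min)
  also have "\<dots> \<longleftrightarrow> accepts_within F2xF2 \<delta> q0 (set Qa) w ?T"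
    using accepts_within_iff_guided_run[OF tr, of F2xF2] by (simp add: F2xF2_one)
  moreover have "(\<forall>i<code_length (list_encode w).
        code_member (code_nth a 3) (code_nth (list_encode w) i)) \<longleftrightarrow> w \<in> lists (set Sg)"
    using fields all_nth_in_iff_lists[of w "set Sg"]
    by (simp add: code_length_list_encode code_nth_list_encode code_member_list_encode)
  ultimately show ?thesis
    using fields by (simp add: code_accepts_def code_time_bound_def code_length_list_encode)
qed

lemmas computable_code_intros = computable_intros computable_prod_encode computable_fst_prod_decode
  computable_snd_prod_decode computable_code_nth computable_code_length computable_code_drop
  computable_code_hd computable_code_mult decidable_code_member

lemma computable_code_step:
  "computable k f \<Longrightarrow> computable k g \<Longrightarrow> computable k u \<Longrightarrow> computable k v \<Longrightarrow>
   computable k (\<lambda>xs. code_step (f xs) (g xs) (u xs) (v xs))"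
proof (rule computable_lift4[where h = code_step])
  show "computable 4 (\<lambda>xs. code_step (xs ! 0) (xs ! 1) (xs ! 2) (xs ! 3))"
    unfolding code_step_def cfg_state_def cfg_pos_def cfg_reg1_def cfg_reg2_def cfg_ok_def
      config_code_def code_field_def code_num_transitions_def code_transitions_def
    by (intro computable_code_intros | simp)+
qed

lemma computable_code_run:
  "computable k f \<Longrightarrow> computable k g \<Longrightarrow> computable k u \<Longrightarrow> computable k v \<Longrightarrow>
   computable k (\<lambda>xs. code_run (f xs) (g xs) (u xs) (v xs))"
proof (rule computable_lift4[where h = code_run])
  have "computable 4 (\<lambda>xs. rec_nat (config_code (code_nth (xs ! 0) 1) 0 0 0 1)
      (\<lambda>n r. (\<lambda>ys. code_step (ys ! 2) (ys ! 3) (code_nth (ys ! 4) (ys ! 0)) (ys ! 1)) (n # r # xs))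
      (xs ! 3))"
    unfolding config_code_def
    by (intro computable_rec_nat computable_code_step computable_code_intros | simp)+
  then show "computable 4 (\<lambda>xs. code_run (xs ! 0) (xs ! 1) (xs ! 2) (xs ! 3))"
    by (simp add: code_run_def config_code_def)
qed

lemma decidable_code_accepts:
  "computable k f \<Longrightarrow> computable k g \<Longrightarrow> decidable k (\<lambda>xs. code_accepts (f xs) (g xs))"
proof (rule decidable_lift2[where P = code_accepts])
  show "decidable 2 (\<lambda>xs. code_accepts (xs ! 0) (xs ! 1))"
    unfolding code_accepts_def code_accepting_def code_time_bound_def code_num_transitions_def
      code_transitions_def cfg_state_def cfg_pos_def cfg_reg1_def cfg_reg2_def cfg_ok_def
    by (intro computable_code_intros computable_list_encode_replicate computable_code_run | simp)+
qed

text \<open>Minimizing a function that ignores the search variable and vanishes exactly where \<open>P\<close>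
  holds yields a partial function with domain \<open>P\<close>.\<close>

lemma decidable_imp_rec_eval_domain:
  assumes "decidable 1 (\<lambda>xs. P (xs ! 0))"
  obtains f where "\<And>x. (\<exists>r. rec_eval f [x] r) \<longleftrightarrow> P x"
proof -
  have "computable 1 (\<lambda>xs. 1 - (if P (xs ! 0) then 1 else 0))"
    by (intro computable_diff computable_const assms[unfolded decidable_def])
  then have "computable 1 (\<lambda>xs. (\<lambda>a. if P a then 0 else 1) (xs ! 0))"
    by (rule computable_cong) auto
  from computable_lift1[OF this computable_nth[of 1 2]]
  obtain g where g: "computes g 2 (\<lambda>ys. if P (ys ! 1) then 0 else 1)"
    unfolding computable_def by auto
  then have g_eval: "rec_eval g [r, x] v \<longleftrightarrow> v = (if P x then 0 else 1)" for r x v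
    unfolding computes_def by (simp add: numeral_2_eq_2)
  have "(\<exists>r. rec_eval (Mnf g) [x] r) \<longleftrightarrow> P x" for x
  proof
    assume "\<exists>r. rec_eval (Mnf g) [x] r"
    then obtain r where "rec_eval g [r, x] 0" by (auto elim: rec_eval.cases)
    then show "P x" by (simp add: g_eval split: if_splits)
  next
    assume "P x"
    then have "rec_eval g [0, x] 0" by (simp add: g_eval)
    then show "\<exists>r. rec_eval (Mnf g) [x] r" by (auto intro: rec_eval.intros)
  qed
  then show ?thesis using that by blast
qed

lemma decidable_on_codes_imp_RE:
  assumes "finite \<Sigma>" and "L \<subseteq> lists \<Sigma>" and "decidable 1 (\<lambda>xs. P (xs ! 0))"
    and "\<And>w. w \<in> L \<longleftrightarrow> P (list_encode w)"
  shows "L \<in> RE"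
proof -
  obtain f where "\<And>x. (\<exists>r. rec_eval f [x] r) \<longleftrightarrow> P x"
    using decidable_imp_rec_eval_domain[OF assms(3)] by blast
  then have "\<forall>w. w \<in> L \<longleftrightarrow> (\<exists>r. rec_eval f [list_encode w] r)" using assms(4) by simp
  then show ?thesis unfolding RE_def using assms(1,2) by blast
qed

lemma bigo_imp_affine_bound:
  assumes "(\<lambda>n. real (t n)) \<in> O(\<lambda>n. real n)"
  obtains c :: nat where "\<And>n. t n \<le> c * n + c"
proof -
  obtain C where "C > 0" and "eventually (\<lambda>n. norm (real (t n)) \<le> C * norm (real n)) at_top"
    using assms unfolding bigo_def by blast
  then obtain N where N: "\<And>n. n \<ge> N \<Longrightarrow> real (t n) \<le> C * real n"
    unfolding eventually_at_top_linorder by auto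
  define c where "c = nat \<lceil>C\<rceil> + (\<Sum>n<N. t n)"
  have "t n \<le> c * n + c" for n
  proof (cases "n \<ge> N")
    case True
    have "real (t n) \<le> C * real n" using N True by blast
    also have "\<dots> \<le> real (nat \<lceil>C\<rceil>) * real n"
      by (intro mult_right_mono real_nat_ceiling_ge) auto
    also have "\<dots> \<le> real c * real n" by (intro mult_right_mono) (auto simp: c_def sum_nonneg)
    also have "\<dots> = real (c * n)" by simp
    finally have "t n \<le> c * n" by linarith
    then show ?thesis by simp
  next
    case False
    then have "t n \<le> (\<Sum>n<N. t n)" by (intro member_le_sum) auto
    then show ?thesis unfolding c_def by simp
  qed
  then show ?thesis using that by blast
qed

lemma accepts_within_mono:
  "accepts_within G \<delta> q0 Qa w k \<Longrightarrow> k \<le> k' \<Longrightarrow> accepts_within G \<delta> q0 Qa w k'"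
  unfolding accepts_within_def by (auto intro: le_trans)

lemma weak_lin_class_affine_time:
  assumes "L \<in> weak_lin_class G"
  obtains Q :: "nat set" and \<Sigma> \<delta> q0 Qa and c :: nat
  where "is_G_automaton G Q \<Sigma> \<delta> q0 Qa"
    and "\<And>w. w \<in> L \<longleftrightarrow> w \<in> lists \<Sigma> \<and> accepts_within G \<delta> q0 Qa w (c * length w + c)"
proof -
  obtain Q :: "nat set" and \<Sigma> \<delta> q0 Qa and t :: "nat \<Rightarrow> nat"
    where aut: "is_G_automaton G Q \<Sigma> \<delta> q0 Qa" and lang: "G_lang G \<Sigma> \<delta> q0 Qa = L"
      and big: "(\<lambda>n. real (t n)) \<in> O(\<lambda>n. real n)"
      and acc: "\<forall>w\<in>L. accepts_within G \<delta> q0 Qa w (t (length w))"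
    using assms unfolding weak_lin_class_def by blast
  obtain c where c: "\<And>n. t n \<le> c * n + c" using bigo_imp_affine_bound[OF big] by blast
  have "w \<in> L \<longleftrightarrow> w \<in> lists \<Sigma> \<and> accepts_within G \<delta> q0 Qa w (c * length w + c)" for w
  proof
    assume "w \<in> L"
    then have "w \<in> lists \<Sigma>" using lang unfolding G_lang_def by blast
    moreover have "accepts_within G \<delta> q0 Qa w (c * length w + c)"
      using accepts_within_mono[OF acc[rule_format, OF \<open>w \<in> L\<close>] c] .
    ultimately show "w \<in> lists \<Sigma> \<and> accepts_within G \<delta> q0 Qa w (c * length w + c)" ..
  next
    assume "w \<in> lists \<Sigma> \<and> accepts_within G \<delta> q0 Qa w (c * length w + c)"
    then show "w \<in> L" using lang unfolding G_lang_def by blast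
  qed
  with aut show ?thesis using that by blast
qed

lemma finite_transitions:
  assumes "is_G_automaton G Q \<Sigma> \<delta> q0 Qa"
  shows "finite {(q, s, q', m). (q', m) \<in> \<delta> q s}"
proof (rule finite_subset)
  let ?S = "insert None (Some ` \<Sigma>)"
  have empty: "q \<notin> Q \<or> (\<exists>a. s = Some a \<and> a \<notin> \<Sigma>) \<Longrightarrow> \<delta> q s = {}" for q s
    using assms unfolding is_G_automaton_def by blast
  show "{(q, s, q', m). (q', m) \<in> \<delta> q s} \<subseteq> (\<Union>q\<in>Q. \<Union>s\<in>?S. (\<lambda>(q', m). (q, s, q', m)) ` \<delta> q s)"
  proof clarify
    fix q s q' m
    assume mem: "(q', m) \<in> \<delta> q s"
    then have "q \<in> Q" and "s \<in> ?S" using empty[of q s] by (cases s; auto)+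
    with mem show "(q, s, q', m) \<in> (\<Union>q\<in>Q. \<Union>s\<in>?S. (\<lambda>(q', m). (q, s, q', m)) ` \<delta> q s)"
      by (intro UN_I[of q] UN_I[of s] image_eqI[where x = "(q', m)"]) auto
  qed
  show "finite (\<Union>q\<in>Q. \<Union>s\<in>?S. (\<lambda>(q', m). (q, s, q', m)) ` \<delta> q s)"
    using assms unfolding is_G_automaton_def by (intro finite_UN_I finite_imageI) auto
qed

lemma weak_lin_class_coded:
  assumes "L \<in> weak_lin_class F2xF2"
  obtains \<Sigma> a where "finite \<Sigma>" and "L \<subseteq> lists \<Sigma>" and "\<And>w. code_accepts a (list_encode w) \<longleftrightarrow> w \<in> L"
proof -
  obtain Q :: "nat set" and \<Sigma> \<delta> q0 Qa and c :: nat
    where aut: "is_G_automaton F2xF2 Q \<Sigma> \<delta> q0 Qa"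
      and L: "\<And>w. w \<in> L \<longleftrightarrow> w \<in> lists \<Sigma> \<and> accepts_within F2xF2 \<delta> q0 Qa w (c * length w + c)"
    using weak_lin_class_affine_time[OF assms] by blast
  then have "finite \<Sigma>" and "finite Qa" and "L \<subseteq> lists \<Sigma>"
    unfolding is_G_automaton_def by (auto intro: finite_subset)
  obtain trs where trs: "set trs = {(q, s, q', m). (q', m) \<in> \<delta> q s}"
    using finite_list[OF finite_transitions[OF aut]] by blast
  then have tr: "lists_transitions \<delta> trs" by (simp add: lists_transitions_def)
  have labels: "reduced_labels trs"
    unfolding reduced_labels_def
  proof clarify
    fix p s p' m
    assume "(p, s, p', m) \<in> set trs"
    then have "(p', m) \<in> \<delta> p s" using trs by simp
    then show "m \<in> carrier F2xF2" using aut unfolding is_G_automaton_def by blast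
  qed
  obtain QaL SgL where "set QaL = Qa" and "set SgL = \<Sigma>"
    using finite_list \<open>finite Qa\<close> \<open>finite \<Sigma>\<close> by metis
  then have "code_accepts (automaton_code trs q0 QaL SgL c) (list_encode w) \<longleftrightarrow> w \<in> L" for w
    using code_accepts_iff[OF refl labels tr] L by simp
  with \<open>finite \<Sigma>\<close> \<open>L \<subseteq> lists \<Sigma>\<close> show ?thesis by (rule that)
qed

lemma weak_lin_class_subset_RE: "weak_lin_class F2xF2 \<subseteq> RE"
proof
  fix L :: "nat list set"
  assume "L \<in> weak_lin_class F2xF2"
  then obtain \<Sigma> a where "finite \<Sigma>" and "L \<subseteq> lists \<Sigma>"
    and a: "\<And>w. code_accepts a (list_encode w) \<longleftrightarrow> w \<in> L"
    by (rule weak_lin_class_coded) blast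
  have "decidable 1 (\<lambda>xs. code_accepts a (xs ! 0))"
    by (intro decidable_code_accepts computable_const computable_nth) simp
  with \<open>finite \<Sigma>\<close> \<open>L \<subseteq> lists \<Sigma>\<close> show "L \<in> RE"
    by (rule decidable_on_codes_imp_RE) (simp add: a)
qed

definition diagonal_language :: "nat list set" where
  "diagonal_language = {w \<in> lists {0}. \<not> code_accepts (length w) (list_encode w)}"

lemma diagonal_language_RE: "diagonal_language \<in> RE"
proof (rule decidable_on_codes_imp_RE[where \<Sigma> = "{0}"
    and P = "\<lambda>x. (\<forall>i<code_length x. code_nth x i = 0) \<and> \<not> code_accepts (code_length x) x"])
  show "decidable 1 (\<lambda>xs. (\<forall>i<code_length (xs ! 0). code_nth (xs ! 0) i = 0) \<and>
      \<not> code_accepts (code_length (xs ! 0)) (xs ! 0))"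
    by (intro computable_code_intros decidable_code_accepts | simp)+
  show "w \<in> diagonal_language \<longleftrightarrow> (\<forall>i<code_length (list_encode w). code_nth (list_encode w) i = 0) \<and>
      \<not> code_accepts (code_length (list_encode w)) (list_encode w)" for w
    using all_nth_in_iff_lists[of w "{0}"]
    by (simp add: diagonal_language_def code_length_list_encode code_nth_list_encode)
qed (auto simp: diagonal_language_def)

lemma diagonal_language_not_weak_lin: "diagonal_language \<notin> weak_lin_class F2xF2"
proof
  assume "diagonal_language \<in> weak_lin_class F2xF2"
  then obtain \<Sigma> a where a: "\<And>w. code_accepts a (list_encode w) \<longleftrightarrow> w \<in> diagonal_language"
    by (rule weak_lin_class_coded) blast
  have "replicate a 0 \<in> diagonal_language \<longleftrightarrow> \<not> code_accepts a (list_encode (replicate a 0))"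
    unfolding diagonal_language_def by auto
  then show False using a by blast
qed

theorem theorem4p13:
  shows "(weak_lin_class (free_group2 \<times>\<times> free_group2) :: nat list set set) \<subset> RE"
  using weak_lin_class_subset_RE diagonal_language_RE diagonal_language_not_weak_lin by blast

end
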